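(* Let $N\ge 1$ and $1\le K\le N$ be integers, let $\lambda_s>0$, $c>0$, and let $T_{\mathrm D}>c$ be a fixed deadline. Let $T_1,\dots,T_N$ be i.i.d. with CDF $F(t)=1-e^{-\lambda_s(t-c)}$ for $t>c$ (and $0$ for $t\le c$), let $T_N(h)$ denote the $h$-th smallest of $T_1,\dots,T_N$, and fix $n\in\{1,\dots,N\}$. Let $\mathcal C_{\mathrm F}=\{T_n>\min\{T_{\mathrm D},T_N(K)\}\}$. Then $$\mathbb P\big(T_{\mathrm D}<T_N(K)\,\big|\,\mathcal C_{\mathrm F}\big)=\frac{(N-K)\mathcal Z_K+\sum_{h=1}^{K}\mathcal Z_h}{N e^{-\lambda_s(T_{\mathrm D}-c)}+(N-K)-\sum_{h=K+1}^{N}\mathcal Z_h},$$ where for $1\le h\le N$, $\mathcal Z_h=\sum_{i=0}^{h-1}B_{h,i}\frac{V_{h,i}}{U_{h,i}}$ with $B_{h,i}=h\binom{N}{h}\binom{h-1}{i}(-1)^i$, $U_{h,i}=N-h+1+i$, $V_{h,i}=e^{-\lambda_sU_{h,i}(T_{\mathrm D}-c)}$ (so that $\mathcal Z_h=\mathbb P(T_{\mathrm D}<T_N(h))$).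
   Context: Model: an access point multicasts a status update to $N$ devices with i.i.d. shifted-exponential delivery times $T_1,\dots,T_N$; transmission terminates at $\min\{T_{\mathrm D},T_N(K)\}$. $\mathcal C_{\mathrm F}$ is the event that device $n$ fails to receive the update; the claimed quantity (denoted $\mathbb P(\mathcal C_{\mathrm F,2})$ in the paper) is the probability that the deadline expired before $K$ devices received the update, given that device $n$ failed. *)

theory Defs
  imports "HOL-Probability.Probability"
begin

definition order_stat :: "nat \<Rightarrow> (nat \<Rightarrow> real) \<Rightarrow> nat \<Rightarrow> real" where
  "order_stat N t h = sort (map t [1..<N+1]) ! (h - 1)"

definition shexp_cdf :: "real \<Rightarrow> real \<Rightarrow> real \<Rightarrow> real" where
  "shexp_cdf lam c t = (if t \<le> c then 0 else 1 - exp (- lam * (t - c)))"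

definition Bcoef :: "nat \<Rightarrow> nat \<Rightarrow> nat \<Rightarrow> real" where
  "Bcoef N h i = real h * real (N choose h) * real ((h - 1) choose i) * (-1) ^ i"

definition Ucoef :: "nat \<Rightarrow> nat \<Rightarrow> nat \<Rightarrow> real" where
  "Ucoef N h i = real N - real h + 1 + real i"

definition Vcoef :: "nat \<Rightarrow> real \<Rightarrow> real \<Rightarrow> real \<Rightarrow> nat \<Rightarrow> nat \<Rightarrow> real" where
  "Vcoef N lam c TD h i = exp (- lam * Ucoef N h i * (TD - c))"

definition Zcoef :: "nat \<Rightarrow> real \<Rightarrow> real \<Rightarrow> real \<Rightarrow> nat \<Rightarrow> real" where
  "Zcoef N lam c TD h = (\<Sum>i = 0..h - 1. Bcoef N h i * Vcoef N lam c TD h i / Ucoef N h i)"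

end

theory Submission
  imports Defs
begin

(*
  Since the delivery times are i.i.d., the event "device n fails" and the event "device n fails and
  the deadline expires first" have the same probability for every device, so N times their
  probability is the expected number of devices m for which the event holds.  These numbers are
  functions of X = #{i. T_i <= T_D}, which is binomial with parameters N and 1 - q,
  q = exp (-lam (T_D - c)): when no two delivery times coincide (an event of probability one, the
  distribution being continuous), N - min X K devices fail, and N - X of them fail late if X < K,
  none otherwise.  Finally Z_h = P (X < h), as both sides agree at q = 0 and have the same
  derivative in q, and summation by parts turns the two binomial expectations into the numerator
  and denominator of the claim.
*)

section \<open>Order statistics\<close>

lemma sorted_nth_iff_length_filter:
  fixes xs :: "'a::linorder list"
  assumes "sorted xs" "h < length xs" and down: "\<And>x y. P y \<Longrightarrow> x \<le> y \<Longrightarrow> P x"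
  shows "P (xs ! h) \<longleftrightarrow> h < length (filter P xs)"
  using assms(1,2)
proof (induction xs arbitrary: h)
  case Nil
  then show ?case by simp
next
  case (Cons x xs)
  show ?case
  proof (cases "P x")
    case True
    then show ?thesis using Cons by (cases h) auto
  next
    case False
    then have none: "\<not> P y" if "y \<in> set (x # xs)" for y
      using that Cons.prems(1) down by auto
    then have "filter P (x # xs) = []"
      by (simp only: filter_empty_conv) blast
    moreover have "\<not> P ((x # xs) ! h)"
      using none nth_mem[OF Cons.prems(2)] by blast
    ultimately show ?thesis by simp
  qed
qed

lemma order_stat_iff_card:
  assumes "1 \<le> h" "h \<le> N" and down: "\<And>x y. P y \<Longrightarrow> x \<le> y \<Longrightarrow> P x"
  shows "P (order_stat N v h) \<longleftrightarrow> h \<le> card {i\<in>{1..N}. P (v i)}"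
proof -
  let ?xs = "map v [1..<N+1]"
  have "P (order_stat N v h) \<longleftrightarrow> h - 1 < length (filter P (sort ?xs))"
    unfolding order_stat_def using assms by (intro sorted_nth_iff_length_filter) auto
  also have "length (filter P (sort ?xs)) = length (filter (P \<circ> v) [1..<N+1])"
    by (simp add: filter_sort filter_map)
  also have "\<dots> = card {i\<in>{1..N}. P (v i)}"
    by (subst distinct_length_filter) (auto intro!: arg_cong[where f=card])
  finally show ?thesis using assms(1) by linarith
qed

lemma order_stat_cong:
  "(\<And>i. i \<in> {1..N} \<Longrightarrow> v i = w i) \<Longrightarrow> order_stat N v h = order_stat N w h"
  unfolding order_stat_def by (metis atLeastLessThanSuc_atLeastAtMost map_cong set_upt Suc_eq_plus1)

lemma order_stat_permute:
  assumes "bij_betw \<sigma> {1..N} {1..N}"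
  shows "order_stat N (v \<circ> \<sigma>) h = order_stat N v h"
proof -
  have L: "mset [1..<N+1] = mset_set {1..N}"
    by (metis mset_upt atLeastLessThanSuc_atLeastAtMost Suc_eq_plus1)
  have "mset (map (v \<circ> \<sigma>) [1..<N+1]) = image_mset v (image_mset \<sigma> (mset_set {1..N}))"
    unfolding mset_map L by (simp add: multiset.map_comp)
  also have "image_mset \<sigma> (mset_set {1..N}) = mset_set {1..N}"
    using assms by (simp add: image_mset_mset_set bij_betw_def)
  finally have "mset (map (v \<circ> \<sigma>) [1..<N+1]) = mset (map v [1..<N+1])"
    unfolding mset_map L .
  then have "sort (map (v \<circ> \<sigma>) [1..<N+1]) = sort (map v [1..<N+1])"
    by (intro properties_for_sort) simp_all
  then show ?thesis unfolding order_stat_def by simp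
qed

lemma order_stat_mem_image:
  assumes "1 \<le> h" "h \<le> N"
  shows "order_stat N v h \<in> v ` {1..N}"
proof -
  have "order_stat N v h \<in> set (sort (map v [1..<N+1]))"
    unfolding order_stat_def using assms by (intro nth_mem) simp
  then show ?thesis by auto
qed

lemma card_le_order_stat:
  assumes "1 \<le> h" "h \<le> N" "inj_on v {1..N}"
  shows "card {i\<in>{1..N}. v i \<le> order_stat N v h} = h"
proof -
  let ?s = "order_stat N v h"
  obtain j where j: "j \<in> {1..N}" "v j = ?s" using order_stat_mem_image[OF assms(1,2), of v] by auto
  have split: "{i\<in>{1..N}. v i \<le> ?s} = insert j {i\<in>{1..N}. v i < ?s}"
  proof (intro equalityI subsetI)
    fix i assume i: "i \<in> {i\<in>{1..N}. v i \<le> ?s}"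
    show "i \<in> insert j {i\<in>{1..N}. v i < ?s}"
    proof (cases "v i = v j")
      case True
      then show ?thesis using inj_onD[OF assms(3) True] i j(1) by simp
    next
      case False
      then show ?thesis using i j(2) by auto
    qed
  qed (use j in auto)
  have "card {i\<in>{1..N}. v i \<le> ?s} = Suc (card {i\<in>{1..N}. v i < ?s})"
    unfolding split using j by (intro card_insert_disjoint) auto
  moreover have "h \<le> card {i\<in>{1..N}. v i \<le> ?s}"
    using order_stat_iff_card[OF assms(1,2), of "\<lambda>y. y \<le> ?s" v] by simp
  moreover have "card {i\<in>{1..N}. v i < ?s} < h"
    using order_stat_iff_card[OF assms(1,2), of "\<lambda>y. y < ?s" v] by simp
  ultimately show ?thesis by linarith
qed

lemma less_order_stat_iff:
  assumes "1 \<le> k" "k \<le> N"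
  shows "t < order_stat N v k \<longleftrightarrow> card {i\<in>{1..N}. v i \<le> t} < k"
  using order_stat_iff_card[OF assms, of "\<lambda>y. y \<le> t" v] by force

lemma min_order_stat_less_iff:
  assumes "1 \<le> k" "k \<le> N"
  shows "min t (order_stat N v k) < a \<longleftrightarrow> t < a \<or> k \<le> card {i\<in>{1..N}. v i < a}"
  using order_stat_iff_card[OF assms, of "\<lambda>y. y < a" v] by auto

(* Device m fails when v m exceeds min t (order_stat N v k), i.e. it has not received the update
   when the transmission stops; it fails late when moreover the deadline t comes first. *)
lemma card_fail:
  assumes "1 \<le> k" "k \<le> N" "inj_on v {1..N}"
  shows "card {m\<in>{1..N}. min t (order_stat N v k) < v m} = N - min (card {i\<in>{1..N}. v i \<le> t}) k"
proof -
  let ?s = "order_stat N v k" and ?c = "card {i\<in>{1..N}. v i \<le> t}"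
  have not_fail: "card {m\<in>{1..N}. \<not> min t ?s < v m} = min ?c k"
  proof (cases "?c < k")
    case True
    then have "t < ?s" using less_order_stat_iff[OF assms(1,2)] by blast
    then have "{m\<in>{1..N}. \<not> min t ?s < v m} = {i\<in>{1..N}. v i \<le> t}" by auto
    then show ?thesis using True by simp
  next
    case False
    then have "?s \<le> t" using less_order_stat_iff[OF assms(1,2), of t v] by linarith
    then have "{m\<in>{1..N}. \<not> min t ?s < v m} = {i\<in>{1..N}. v i \<le> ?s}" by auto
    then show ?thesis using False card_le_order_stat[OF assms] by simp
  qed
  have "card {m\<in>{1..N}. min t ?s < v m} = card ({1..N} - {m\<in>{1..N}. \<not> min t ?s < v m})"
    by (rule arg_cong[where f=card]) auto
  also have "\<dots> = N - card {m\<in>{1..N}. \<not> min t ?s < v m}"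
    by (subst card_Diff_subset) auto
  finally show ?thesis unfolding not_fail .
qed

lemma card_late_fail:
  assumes "1 \<le> k" "k \<le> N"
  shows "card {m\<in>{1..N}. t < order_stat N v k \<and> min t (order_stat N v k) < v m}
       = (if card {i\<in>{1..N}. v i \<le> t} < k then N - card {i\<in>{1..N}. v i \<le> t} else 0)"
proof (cases "card {i\<in>{1..N}. v i \<le> t} < k")
  case True
  then have "t < order_stat N v k" using less_order_stat_iff[OF assms] by blast
  then have "card {m\<in>{1..N}. t < order_stat N v k \<and> min t (order_stat N v k) < v m}
      = card ({1..N} - {i\<in>{1..N}. v i \<le> t})"
    by (intro arg_cong[where f=card]) auto
  also have "\<dots> = N - card {i\<in>{1..N}. v i \<le> t}"
    by (subst card_Diff_subset) auto
  finally show ?thesis using True by simp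
next
  case False
  then show ?thesis using less_order_stat_iff[OF assms, of t v] by auto
qed

section \<open>Binomial identities\<close>

lemma Suc_times_binomial_eq_diff_times_binomial:
  "real (Suc h) * real (N choose Suc h) = real (N - h) * real (N choose h)"
  by (metis binomial_absorb_comp binomial_absorption of_nat_mult)

lemma binomial_cdf_has_real_derivative:
  fixes x :: real
  assumes "1 \<le> h" "h \<le> N"
  shows "((\<lambda>x. \<Sum>k<h. real (N choose k) * (1 - x) ^ k * x ^ (N - k)) has_real_derivative
          real h * real (N choose h) * (1 - x) ^ (h - 1) * x ^ (N - h)) (at x)"
  using assms
proof (induction h rule: nat_induct_at_least)
  case base
  show ?case using DERIV_pow[of N x] by simp
next
  case (Suc h)
  then obtain m where N: "N - h = Suc m" "N - Suc h = m"
    by (metis Suc_diff_Suc Suc_le_lessD diff_Suc_Suc)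
  have "((\<lambda>x. real (N choose h) * (1 - x) ^ h * x ^ Suc m) has_real_derivative
      real (N choose h) * (real (Suc m) * (1 - x) ^ h * x ^ m - real h * (1 - x) ^ (h - 1) * x ^ Suc m)) (at x)"
    by (auto intro!: derivative_eq_intros) (cases m; simp add: algebra_simps)
  from DERIV_add[OF Suc.IH[OF Suc_leD[OF Suc.prems]] this]
  have "((\<lambda>x. \<Sum>k<Suc h. real (N choose k) * (1 - x) ^ k * x ^ (N - k)) has_real_derivative
      real (Suc m) * real (N choose h) * (1 - x) ^ h * x ^ m) (at x)"
    using Suc.hyps by (simp add: N algebra_simps)
  then show ?case
    using Suc_times_binomial_eq_diff_times_binomial[of h N] by (simp add: N mult.assoc)
qed

(* The left-hand side is the incomplete beta integral
   h (N choose h) \<integral>\<^sub>0\<^sup>x s ^ (N - h) (1 - s) ^ (h - 1) ds, with (1 - s) ^ (h - 1) expanded. *)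
lemma binomial_cdf_eq_beta_sum:
  fixes x :: real
  assumes "1 \<le> h" "h \<le> N"
  shows "(\<Sum>i=0..h-1. real h * real (N choose h) * real ((h - 1) choose i) * (-1) ^ i
            * x ^ (N - h + 1 + i) / real (N - h + 1 + i))
       = (\<Sum>k<h. real (N choose k) * (1 - x) ^ k * x ^ (N - k))"
    (is "?G x = ?F x")
proof -
  let ?c = "\<lambda>i. real h * real (N choose h) * real ((h - 1) choose i) * (-1) ^ i"
  have "((\<lambda>x. ?G x - ?F x) has_real_derivative 0) (at y)" for y
  proof -
    have pow: "((\<lambda>x. a * x ^ Suc n / real (Suc n)) has_real_derivative a * y ^ n) (at y)"
      for a :: real and n
      using DERIV_cdivide[OF DERIV_cmult[OF DERIV_pow[of "Suc n" y]], of a "real (Suc n)"] by simp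
    have "N - h + 1 + i = Suc (N - h + i)" for i by simp
    then have "(?G has_real_derivative (\<Sum>i=0..h-1. ?c i * y ^ (N - h + i))) (at y)"
      by (simp only:) (intro DERIV_sum pow)
    also have "(\<Sum>i=0..h-1. ?c i * y ^ (N - h + i))
        = real h * real (N choose h) * y ^ (N - h) * (\<Sum>i\<le>h-1. real ((h - 1) choose i) * (- y) ^ i * 1 ^ (h - 1 - i))"
      by (simp add: atLeast0AtMost sum_distrib_left power_add power_minus' mult_ac)
    also have "\<dots> = real h * real (N choose h) * (1 - y) ^ (h - 1) * y ^ (N - h)"
      using binomial_ring[of "- y" 1 "h - 1"] by simp
    finally have "(?G has_real_derivative real h * real (N choose h) * (1 - y) ^ (h - 1) * y ^ (N - h)) (at y)" .
    from DERIV_diff[OF this binomial_cdf_has_real_derivative[OF assms, of y]] show ?thesis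
      by simp
  qed
  then have "?G x - ?F x = ?G 0 - ?F 0"
    using DERIV_isconst_all[of "\<lambda>x. ?G x - ?F x" x 0] by blast
  also have "?G 0 - ?F 0 = 0" using assms by (auto intro!: sum.neutral)
  finally show ?thesis by simp
qed

lemma Zcoef_eq_binomial_cdf:
  assumes "1 \<le> h" "h \<le> N" "q = exp (- lam * (TD - c))"
  shows "Zcoef N lam c TD h = (\<Sum>k<h. real (N choose k) * (1 - q) ^ k * q ^ (N - k))"
proof -
  have "Bcoef N h i * Vcoef N lam c TD h i / Ucoef N h i
      = real h * real (N choose h) * real ((h - 1) choose i) * (-1) ^ i
          * q ^ (N - h + 1 + i) / real (N - h + 1 + i)" for i
  proof -
    have U: "Ucoef N h i = real (N - h + 1 + i)"
      using assms by (simp add: Ucoef_def of_nat_diff)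
    have "Vcoef N lam c TD h i = exp (real (N - h + 1 + i) * (- lam * (TD - c)))"
      unfolding Vcoef_def U by (simp add: mult_ac)
    also have "\<dots> = q ^ (N - h + 1 + i)"
      unfolding exp_of_nat_mult assms(3) ..
    finally show ?thesis unfolding Bcoef_def U by simp
  qed
  then show ?thesis
    unfolding Zcoef_def using binomial_cdf_eq_beta_sum[OF assms(1,2)] by simp
qed

lemma sum_binomial_weights: "(\<Sum>k\<le>N. real (N choose k) * (1 - q) ^ k * q ^ (N - k)) = 1"
  using binomial_ring[of "1 - q" q N] by simp

lemma sum_binomial_weights_mean:
  "(\<Sum>k\<le>N. real k * (real (N choose k) * (1 - q) ^ k * q ^ (N - k))) = real N * (1 - q)"
proof (cases N)
  case 0
  then show ?thesis by simp
next
  case (Suc n)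
  have "(\<Sum>k\<le>Suc n. real k * (real (Suc n choose k) * (1 - q) ^ k * q ^ (Suc n - k)))
      = (\<Sum>k\<le>n. real (Suc k) * real (Suc n choose Suc k) * (1 - q) ^ Suc k * q ^ (n - k))"
    by (subst sum.atMost_Suc_shift) (simp add: mult.assoc)
  also have "\<dots> = (\<Sum>k\<le>n. real (Suc n) * (1 - q) * (real (n choose k) * (1 - q) ^ k * q ^ (n - k)))"
  proof (intro sum.cong refl)
    fix k
    have "real (Suc k) * real (Suc n choose Suc k) = real (Suc n) * real (n choose k)"
      by (metis Suc_times_binomial of_nat_mult)
    then show "real (Suc k) * real (Suc n choose Suc k) * (1 - q) ^ Suc k * q ^ (n - k)
        = real (Suc n) * (1 - q) * (real (n choose k) * (1 - q) ^ k * q ^ (n - k))"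
      by (simp add: mult_ac)
  qed
  also have "\<dots> = real (Suc n) * (1 - q)"
    by (simp only: sum_distrib_left[symmetric] sum_binomial_weights)
  finally show ?thesis using Suc by simp
qed

lemma sum_partial_sums_eq:
  fixes b :: "nat \<Rightarrow> real"
  assumes "K \<le> m"
  shows "(\<Sum>h=K+1..m. \<Sum>k<h. b k) = (\<Sum>k<m. (real m - real (max k K)) * b k)"
  using assms
proof (induction m rule: dec_induct)
  case base
  show ?case by (auto intro!: sum.neutral)
next
  case (step m)
  have "(\<Sum>h=K+1..Suc m. \<Sum>k<h. b k) = (\<Sum>k<m. (real m - real (max k K)) * b k) + (\<Sum>k<Suc m. b k)"
    using step by simp
  also have "\<dots> = (\<Sum>k<Suc m. (real (Suc m) - real (max k K)) * b k)"
    using step.hyps by (simp add: sum.distrib[symmetric] algebra_simps max_def)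
  finally show ?case .
qed

lemma late_fail_weights_eq_Zcoef:
  assumes "1 \<le> K" "K \<le> N" "q = exp (- lam * (TD - c))"
  shows "(\<Sum>k\<le>N. real (N choose k) * real (if k < K then N - k else 0) * (1 - q) ^ k * q ^ (N - k))
       = real (N - K) * Zcoef N lam c TD K + (\<Sum>h=1..K. Zcoef N lam c TD h)"
proof -
  define b where "b k = real (N choose k) * (1 - q) ^ k * q ^ (N - k)" for k
  have "(\<Sum>k\<le>N. real (N choose k) * real (if k < K then N - k else 0) * (1 - q) ^ k * q ^ (N - k))
      = (\<Sum>k\<le>N. if k < K then (real N - real k) * b k else 0)"
    by (intro sum.cong refl) (simp add: b_def of_nat_diff)
  also have "\<dots> = (\<Sum>k\<in>{k\<in>{..N}. k < K}. (real N - real k) * b k)"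
    by (rule sum.inter_filter[symmetric]) simp
  also have "\<dots> = (\<Sum>k<K. (real N - real k) * b k)"
    using assms(2) by (intro sum.cong) auto
  also have "\<dots> = (real N - real K) * (\<Sum>k<K. b k) + (\<Sum>k<K. (real K - real k) * b k)"
    by (simp add: sum_distrib_left sum.distrib[symmetric] algebra_simps)
  also have "(\<Sum>k<K. (real K - real k) * b k) = (\<Sum>h=1..K. \<Sum>k<h. b k)"
    using sum_partial_sums_eq[of 0 K b] by simp
  also have "(\<Sum>h=1..K. \<Sum>k<h. b k) = (\<Sum>h=1..K. Zcoef N lam c TD h)"
    using assms(2) by (intro sum.cong refl) (auto simp: Zcoef_eq_binomial_cdf[OF _ _ assms(3)] b_def)
  also have "(\<Sum>k<K. b k) = Zcoef N lam c TD K"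
    using assms by (simp add: Zcoef_eq_binomial_cdf[OF _ _ assms(3)] b_def)
  finally show ?thesis
    using assms(2) by (simp add: of_nat_diff)
qed

lemma fail_weights_eq_Zcoef:
  assumes "1 \<le> K" "K \<le> N" "q = exp (- lam * (TD - c))"
  shows "(\<Sum>k\<le>N. real (N choose k) * real (N - min k K) * (1 - q) ^ k * q ^ (N - k))
       = real N * q + real (N - K) - (\<Sum>h=K+1..N. Zcoef N lam c TD h)"
proof -
  define b where "b k = real (N choose k) * (1 - q) ^ k * q ^ (N - k)" for k
  have "(\<Sum>k\<le>N. real (N choose k) * real (N - min k K) * (1 - q) ^ k * q ^ (N - k))
      = (\<Sum>k\<le>N. real N * b k - real k * b k + (real N - real K) * b k
                   - (real N - real (max k K)) * b k)"
    using assms(2) by (intro sum.cong refl) (auto simp: b_def of_nat_diff min_def max_def algebra_simps)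
  also have "\<dots> = real N * (\<Sum>k\<le>N. b k) - (\<Sum>k\<le>N. real k * b k)
      + (real N - real K) * (\<Sum>k\<le>N. b k) - (\<Sum>k\<le>N. (real N - real (max k K)) * b k)"
    by (simp add: sum_subtractf sum.distrib sum_distrib_left)
  also have "(\<Sum>k\<le>N. (real N - real (max k K)) * b k) = (\<Sum>k<N. (real N - real (max k K)) * b k)"
    using assms(2) by (simp add: lessThan_Suc_atMost[symmetric])
  also have "real N * (\<Sum>k\<le>N. b k) - (\<Sum>k\<le>N. real k * b k) + (real N - real K) * (\<Sum>k\<le>N. b k)
      = real N * q + real (N - K)"
    using assms(2) sum_binomial_weights[of N q] sum_binomial_weights_mean[of N q]
    by (simp add: b_def of_nat_diff algebra_simps)
  also have "(\<Sum>k<N. (real N - real (max k K)) * b k) = (\<Sum>h=K+1..N. \<Sum>k<h. b k)"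
    using sum_partial_sums_eq[OF assms(2)] by simp
  also have "\<dots> = (\<Sum>h=K+1..N. Zcoef N lam c TD h)"
    using assms(1) by (intro sum.cong refl) (auto simp: Zcoef_eq_binomial_cdf[OF _ _ assms(3)] b_def)
  finally show ?thesis .
qed

section \<open>Counting independent events\<close>

lemma real_card_Collect_eq_sum: "finite I \<Longrightarrow> real (card {i\<in>I. P i}) = (\<Sum>i\<in>I. if P i then 1 else 0)"
  by (simp flip: sum.inter_filter)

lemma measurable_card_Collect [measurable]:
  assumes "finite I" "\<And>i. i \<in> I \<Longrightarrow> Measurable.pred M (P i)"
  shows "(\<lambda>x. card {i\<in>I. P i x}) \<in> measurable M (count_space UNIV)"
proof -
  have real_card: "(\<lambda>x. real (card {i\<in>I. P i x})) \<in> borel_measurable M"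
    using assms by (simp add: real_card_Collect_eq_sum borel_measurable_sum)
  show ?thesis
    unfolding measurable_count_space_eq2_countable
  proof (intro conjI ballI)
    fix a :: nat
    have "{x\<in>space M. real (card {i\<in>I. P i x}) = real a} \<in> sets M"
      using real_card by measurable
    then show "(\<lambda>x. card {i\<in>I. P i x}) -` {a} \<inter> space M \<in> sets M"
      by (simp add: vimage_def Int_def conj_commute)
  qed simp
qed


lemma (in prob_space) sum_prob_eq_expectation_card:
  assumes "finite I" "\<And>m. m \<in> I \<Longrightarrow> Measurable.pred M (P m)"
  shows "(\<Sum>m\<in>I. prob {\<omega>\<in>space M. P m \<omega>}) = expectation (\<lambda>\<omega>. real (card {m\<in>I. P m \<omega>}))"
proof -
  have "expectation (\<lambda>\<omega>. real (card {m\<in>I. P m \<omega>}))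
      = expectation (\<lambda>\<omega>. \<Sum>m\<in>I. indicator {\<omega>\<in>space M. P m \<omega>} \<omega>)"
    unfolding real_card_Collect_eq_sum[OF assms(1)]
    by (intro Bochner_Integration.integral_cong sum.cong refl) (simp add: indicator_def)
  also have "\<dots> = (\<Sum>m\<in>I. prob {\<omega>\<in>space M. P m \<omega>})"
    using assms by (subst Bochner_Integration.integral_sum)
      (auto intro!: integrable_real_indicator simp: pred_def emeasure_eq_measure)
  finally show ?thesis ..
qed

lemma sum_Pow_by_card:
  fixes f :: "nat \<Rightarrow> 'a::comm_semiring_1"
  assumes "finite I"
  shows "(\<Sum>J\<in>Pow I. f (card J)) = (\<Sum>k\<le>card I. of_nat (card I choose k) * f k)"
proof -
  have "(\<Sum>J\<in>Pow I. f (card J)) = (\<Sum>k\<le>card I. \<Sum>J\<in>{J\<in>Pow I. card J = k}. f (card J))"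
    using assms by (intro sum.group[symmetric]) (auto intro: card_mono)
  also have "\<dots> = (\<Sum>k\<le>card I. of_nat (card I choose k) * f k)"
  proof (intro sum.cong refl)
    fix k
    have "{J\<in>Pow I. card J = k} = {J. J \<subseteq> I \<and> card J = k}" by auto
    then show "(\<Sum>J\<in>{J\<in>Pow I. card J = k}. f (card J)) = of_nat (card I choose k) * f k"
      using n_subsets[OF assms, of k] by simp
  qed
  finally show ?thesis .
qed

lemma (in prob_space) hit_set_eq_Collect_All:
  assumes "J \<subseteq> I" "\<And>i. i \<in> I \<Longrightarrow> random_variable S (X i)"
  shows "{\<omega>\<in>space M. {i\<in>I. X i \<omega> \<in> A} = J}
       = {\<omega>\<in>space M. \<forall>i\<in>I. X i \<omega> \<in> (if i \<in> J then A else space S - A)}"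
  using assms(1) measurable_space[OF assms(2)] by auto

lemma (in prob_space) hit_set_in_events:
  assumes "finite I" "J \<subseteq> I" "\<And>i. i \<in> I \<Longrightarrow> random_variable S (X i)" "A \<in> sets S"
  shows "{\<omega>\<in>space M. {i\<in>I. X i \<omega> \<in> A} = J} \<in> events"
proof -
  have B: "{\<omega>\<in>space M. X i \<omega> \<in> (if i \<in> J then A else space S - A)} \<in> events" if "i \<in> I" for i
  proof -
    have "(if i \<in> J then A else space S - A) \<in> sets S" using assms(4) by auto
    from measurable_sets[OF assms(3)[OF that] this] show ?thesis
      by (simp add: vimage_def Int_def conj_commute)
  qed
  have "{\<omega>\<in>space M. {i\<in>I. X i \<omega> \<in> A} = J}
      = {\<omega>\<in>space M. \<forall>i\<in>I. X i \<omega> \<in> (if i \<in> J then A else space S - A)}"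
    using assms(2,3) by (rule hit_set_eq_Collect_All)
  also have "\<dots> \<in> events"
    by (rule sets.sets_Collect_finite_All[OF B assms(1)])
  finally show ?thesis .
qed

lemma (in prob_space) prob_indep_hit_set:
  assumes "finite I" and indep: "indep_vars (\<lambda>_. S) X I" and "A \<in> sets S"
    and p: "\<And>i. i \<in> I \<Longrightarrow> prob {\<omega>\<in>space M. X i \<omega> \<in> A} = p" and "J \<subseteq> I"
  shows "prob {\<omega>\<in>space M. {i\<in>I. X i \<omega> \<in> A} = J} = p ^ card J * (1 - p) ^ (card I - card J)"
proof (cases "I = {}")
  case True
  then show ?thesis using \<open>J \<subseteq> I\<close> prob_space by simp
next
  case False
  have X: "random_variable S (X i)" if "i \<in> I" for i
    using indep that by (simp add: indep_vars_def)
  let ?B = "\<lambda>i. if i \<in> J then A else space S - A"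
  have "{\<omega>\<in>space M. {i\<in>I. X i \<omega> \<in> A} = J} = {\<omega>\<in>space M. \<forall>i\<in>I. X i \<omega> \<in> ?B i}"
    using \<open>J \<subseteq> I\<close> X by (rule hit_set_eq_Collect_All)
  also have "\<dots> = (\<Inter>i\<in>I. X i -` ?B i \<inter> space M)"
    using False by auto
  finally have "prob {\<omega>\<in>space M. {i\<in>I. X i \<omega> \<in> A} = J} = prob (\<Inter>i\<in>I. X i -` ?B i \<inter> space M)"
    by (rule arg_cong)
  also have "\<dots> = (\<Prod>i\<in>I. prob (X i -` ?B i \<inter> space M))"
    using assms(3) by (intro indep_varsD_finite[OF indep False assms(1)]) auto
  also have "\<dots> = (\<Prod>i\<in>I. if i \<in> J then p else 1 - p)"
  proof (intro prod.cong refl)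
    fix i assume i: "i \<in> I"
    have "X i -` A \<inter> space M \<in> events" using X[OF i] \<open>A \<in> sets S\<close> by (rule measurable_sets)
    moreover have "X i -` (space S - A) \<inter> space M = space M - (X i -` A \<inter> space M)"
      using X[OF i] by (auto simp: measurable_space)
    moreover have "prob (X i -` A \<inter> space M) = p"
      using p[OF i] by (simp add: vimage_def Int_def conj_commute)
    ultimately show "prob (X i -` ?B i \<inter> space M) = (if i \<in> J then p else 1 - p)"
      by (simp add: prob_compl)
  qed
  also have "\<dots> = p ^ card J * (1 - p) ^ (card I - card J)"
    using \<open>J \<subseteq> I\<close> assms(1)
    by (simp add: prod.If_cases Int_absorb1 Diff_eq[symmetric] card_Diff_subset finite_subset)
  finally show ?thesis .
qed

lemma (in prob_space) expectation_fun_card_hits: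
  fixes g :: "nat \<Rightarrow> real"
  assumes "finite I" and indep: "indep_vars (\<lambda>_. S) X I" and "A \<in> sets S"
    and p: "\<And>i. i \<in> I \<Longrightarrow> prob {\<omega>\<in>space M. X i \<omega> \<in> A} = p"
  shows "expectation (\<lambda>\<omega>. g (card {i\<in>I. X i \<omega> \<in> A}))
       = (\<Sum>k\<le>card I. real (card I choose k) * g k * p ^ k * (1 - p) ^ (card I - k))"
proof -
  let ?E = "\<lambda>J. {\<omega>\<in>space M. {i\<in>I. X i \<omega> \<in> A} = J}"
  have X: "random_variable S (X i)" if "i \<in> I" for i
    using indep that by (simp add: indep_vars_def)
  have E: "?E J \<in> events" if "J \<subseteq> I" for J
    using assms(1) that X assms(3) by (rule hit_set_in_events)
  have "expectation (\<lambda>\<omega>. g (card {i\<in>I. X i \<omega> \<in> A}))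
      = expectation (\<lambda>\<omega>. \<Sum>J\<in>Pow I. g (card J) * indicator (?E J) \<omega>)"
  proof (intro Bochner_Integration.integral_cong refl)
    fix \<omega> assume "\<omega> \<in> space M"
    then have "(\<Sum>J\<in>Pow I. g (card J) * indicator (?E J) \<omega>)
        = (\<Sum>J\<in>Pow I. if J = {i\<in>I. X i \<omega> \<in> A} then g (card J) else 0)"
      by (intro sum.cong) (auto simp: indicator_def)
    then show "g (card {i\<in>I. X i \<omega> \<in> A}) = (\<Sum>J\<in>Pow I. g (card J) * indicator (?E J) \<omega>)"
      using assms(1) by (simp add: sum.delta)
  qed
  also have "\<dots> = (\<Sum>J\<in>Pow I. g (card J) * (p ^ card J * (1 - p) ^ (card I - card J)))"
    using assms E by (subst Bochner_Integration.integral_sum)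
      (auto intro!: integrable_mult_right integrable_real_indicator
        simp: emeasure_eq_measure prob_indep_hit_set)
  also have "\<dots> = (\<Sum>k\<le>card I. real (card I choose k) * g k * p ^ k * (1 - p) ^ (card I - k))"
    using sum_Pow_by_card[OF assms(1), of "\<lambda>k. g k * (p ^ k * (1 - p) ^ (card I - k))"]
    by (simp add: mult_ac)
  finally show ?thesis .
qed

section \<open>Exchangeability and ties\<close>

lemma (in prob_space) distr_restrict_permute_iid:
  assumes rv: "\<And>i. i \<in> I \<Longrightarrow> random_variable S (X i)"
    and indep: "indep_vars (\<lambda>_. S) X I"
    and distr: "\<And>i. i \<in> I \<Longrightarrow> distr M S (X i) = D"
    and \<sigma>: "bij_betw \<sigma> I I"
  shows "distr M (PiM I (\<lambda>_. S)) (\<lambda>\<omega>. \<lambda>i\<in>I. X (\<sigma> i) \<omega>) = distr M (PiM I (\<lambda>_. S)) (\<lambda>\<omega>. \<lambda>i\<in>I. X i \<omega>)"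
proof (cases "I = {}")
  case True
  then show ?thesis by (simp add: restrict_def)
next
  case False
  then obtain j where "j \<in> I" by blast
  have D: "prob_space D" "sets D = sets S"
    using distr[OF \<open>j \<in> I\<close>] rv[OF \<open>j \<in> I\<close>] by (auto intro: prob_space_distr)
  have sets_PiM_D: "sets (PiM I (\<lambda>_. D)) = sets (PiM I (\<lambda>_. S))"
    using D(2) by (intro sets_PiM_cong) auto
  have \<sigma>I: "\<sigma> i \<in> I" if "i \<in> I" for i using \<sigma> that by (auto simp: bij_betw_def)
  let ?g = "\<lambda>v. \<lambda>i\<in>I. v (\<sigma> i)"
  have g: "?g \<in> measurable (PiM I (\<lambda>_. S)) (PiM I (\<lambda>_. S))"
    using \<sigma>I by measurable
  have law: "distr M (PiM I (\<lambda>_. S)) (\<lambda>\<omega>. \<lambda>i\<in>I. X i \<omega>) = PiM I (\<lambda>_. D)"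
    using indep_vars_iff_distr_eq_PiM'[OF False rv] indep distr by (simp cong: PiM_cong)
  have "distr M (PiM I (\<lambda>_. S)) (\<lambda>\<omega>. \<lambda>i\<in>I. X (\<sigma> i) \<omega>)
      = distr (distr M (PiM I (\<lambda>_. S)) (\<lambda>\<omega>. \<lambda>i\<in>I. X i \<omega>)) (PiM I (\<lambda>_. S)) ?g"
    using g rv \<sigma>I by (subst distr_distr) (auto intro!: distr_cong simp: comp_def)
  also have "\<dots> = distr (PiM I (\<lambda>_. D)) (PiM I (\<lambda>_. D)) ?g"
    unfolding law using sets_PiM_D by (intro distr_cong) auto
  also have "\<dots> = PiM I (\<lambda>_. D)"
    using distr_PiM_reindex[of I "\<lambda>_. D" \<sigma> I] D(1) \<sigma> \<sigma>I by (auto simp: bij_betw_def)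
  finally show ?thesis unfolding law .
qed

lemma (in prob_space) prob_indep_eq_atomless:
  fixes X Y :: "'a \<Rightarrow> real"
  assumes indep: "indep_var borel X borel Y"
    and atomless: "\<And>x. prob {\<omega>\<in>space M. Y \<omega> = x} = 0"
  shows "prob {\<omega>\<in>space M. X \<omega> = Y \<omega>} = 0"
proof -
  have X: "random_variable borel X" and Y: "random_variable borel Y"
    using indep by (auto simp: indep_var_distribution_eq)
  interpret Y: prob_space "distr M borel Y" using Y by (rule prob_space_distr)
  define diag where "diag = {p \<in> space (borel \<Otimes>\<^sub>M borel). fst p = (snd p :: real)}"
  have diag: "diag \<in> sets (borel \<Otimes>\<^sub>M borel)" unfolding diag_def by measurable
  have "emeasure (distr M borel X \<Otimes>\<^sub>M distr M borel Y) diag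
      = (\<integral>\<^sup>+x. emeasure (distr M borel Y) (Pair x -` diag) \<partial>distr M borel X)"
    using diag by (intro Y.emeasure_pair_measure_alt) simp
  also have "\<dots> = (\<integral>\<^sup>+x. 0 \<partial>distr M borel X)"
  proof (intro nn_integral_cong)
    fix x
    have "Pair x -` diag = {x}" by (auto simp: diag_def space_pair_measure)
    then show "emeasure (distr M borel Y) (Pair x -` diag) = 0"
      using Y atomless[of x]
      by (simp add: emeasure_distr emeasure_eq_measure vimage_def Int_def conj_commute)
  qed
  finally have null: "measure (distr M borel X \<Otimes>\<^sub>M distr M borel Y) diag = 0"
    by (simp add: measure_def)
  have "prob {\<omega>\<in>space M. X \<omega> = Y \<omega>} = measure (distr M (borel \<Otimes>\<^sub>M borel) (\<lambda>\<omega>. (X \<omega>, Y \<omega>))) diag"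
    using X Y diag by (subst measure_distr) (auto simp: diag_def space_pair_measure intro!: arg_cong[where f=prob])
  also have "\<dots> = 0"
    using indep null by (simp add: indep_var_distribution_eq)
  finally show ?thesis .
qed

lemma (in prob_space) indep_var_of_indep_vars:
  fixes X :: "'i \<Rightarrow> 'a \<Rightarrow> real"
  assumes "indep_vars (\<lambda>_. borel) X I" "i \<in> I" "j \<in> I" "i \<noteq> j"
  shows "indep_var borel (X i) borel (X j)"
proof -
  have "indep_vars (\<lambda>_. borel) X (insert i {j})"
    using assms by (intro indep_vars_subset[OF assms(1)]) auto
  then have "indep_var borel (X i) borel (\<lambda>\<omega>. \<Sum>k\<in>{j}. X k \<omega>)"
    using assms(4) by (intro indep_vars_sum) auto
  then show ?thesis by simp
qed

section \<open>The multicast model\<close>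

lemma continuous_shexp_cdf:
  assumes "0 \<le> lam"
  shows "isCont (shexp_cdf lam c) t"
proof -
  have "shexp_cdf lam c s = max 0 (1 - exp (- lam * (s - c)))" for s
  proof (cases "s \<le> c")
    case True
    then have "1 \<le> exp (- lam * (s - c))" using assms by (simp add: mult_nonneg_nonpos)
    then show ?thesis using True by (simp add: shexp_cdf_def)
  next
    case False
    then have "exp (- lam * (s - c)) \<le> 1" using assms by simp
    then show ?thesis using False by (simp add: shexp_cdf_def)
  qed
  then have "shexp_cdf lam c = (\<lambda>s. max 0 (1 - exp (- lam * (s - c))))" ..
  then show ?thesis by (simp add: continuous_intros)
qed

locale shifted_exp_multicast = prob_space M for M :: "'a measure" +
  fixes T :: "nat \<Rightarrow> 'a \<Rightarrow> real" and N K :: nat and lam c TD :: real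
  assumes K_pos: "1 \<le> K" and K_le_N: "K \<le> N" and lam_pos: "0 < lam" and deadline: "c < TD"
    and random_T [measurable]: "\<And>i. i \<in> {1..N} \<Longrightarrow> random_variable borel (T i)"
    and indep_T: "indep_vars (\<lambda>_. borel) T {1..N}"
    and cdf_T: "\<And>i t. i \<in> {1..N} \<Longrightarrow> prob {x \<in> space M. T i x \<le> t} = shexp_cdf lam c t"
begin

lemma cdf_distr_T: "i \<in> {1..N} \<Longrightarrow> cdf (distr M borel (T i)) = shexp_cdf lam c"
  by (auto simp: fun_eq_iff cdf_def measure_distr cdf_T vimage_def Int_def conj_commute)

lemma distr_T_eq: "i \<in> {1..N} \<Longrightarrow> j \<in> {1..N} \<Longrightarrow> distr M borel (T i) = distr M borel (T j)"
  by (intro cdf_unique) (simp_all add: cdf_distr_T real_distribution_distr)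

lemma prob_T_eq:
  assumes "i \<in> {1..N}"
  shows "prob {\<omega>\<in>space M. T i \<omega> = x} = 0"
proof -
  have "real_distribution (distr M borel (T i))"
    using assms by (simp add: real_distribution_distr)
  moreover have "isCont (cdf (distr M borel (T i))) x"
    using continuous_shexp_cdf lam_pos cdf_distr_T[OF assms] by simp
  ultimately have "measure (distr M borel (T i)) {x} = 0"
    by (simp add: finite_borel_measure.isCont_cdf real_distribution.finite_borel_measure_M)
  then show ?thesis
    using assms by (simp add: measure_distr vimage_def Int_def conj_commute)
qed

lemma AE_inj_on_T: "AE \<omega> in M. inj_on (\<lambda>i. T i \<omega>) {1..N}"
proof -
  have "AE \<omega> in M. T i \<omega> \<noteq> T j \<omega>" if "i \<in> {1..N}" "j \<in> {1..N}" "i \<noteq> j" for i j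
  proof (rule AE_I')
    show "{\<omega>\<in>space M. \<not> T i \<omega> \<noteq> T j \<omega>} \<in> null_sets M"
      using prob_indep_eq_atomless[OF indep_var_of_indep_vars[OF indep_T that] prob_T_eq[OF that(2)]]
        that by (auto simp: null_sets_def emeasure_eq_measure)
  qed simp
  then have "AE \<omega> in M. \<forall>i\<in>{1..N}. \<forall>j\<in>{1..N}. i \<noteq> j \<longrightarrow> T i \<omega> \<noteq> T j \<omega>"
    by (auto intro!: AE_finite_allI)
  then show ?thesis
    by eventually_elim (auto simp: inj_on_def)
qed

lemma measurable_restrict_T:
  "\<tau> \<in> {1..N} \<rightarrow> {1..N} \<Longrightarrow> (\<lambda>\<omega>. \<lambda>i\<in>{1..N}. T (\<tau> i) \<omega>) \<in> measurable M (PiM {1..N} (\<lambda>_. borel))"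
  by (auto intro!: measurable_restrict random_T)

lemma Collect_local_eq_vimage:
  assumes local: "\<And>v w. (\<And>i. i \<in> {1..N} \<Longrightarrow> v i = w i) \<Longrightarrow> Q v \<longleftrightarrow> Q w"
  shows "{\<omega>\<in>space M. Q (\<lambda>i. T (\<tau> i) \<omega>)}
       = (\<lambda>\<omega>. \<lambda>i\<in>{1..N}. T (\<tau> i) \<omega>) -` {v\<in>space (PiM {1..N} (\<lambda>_. borel)). Q v} \<inter> space M"
proof -
  have "Q (\<lambda>i. T (\<tau> i) \<omega>) \<longleftrightarrow> Q (\<lambda>i\<in>{1..N}. T (\<tau> i) \<omega>)" for \<omega>
    by (rule local) simp
  then show ?thesis by (auto simp: space_PiM)
qed

lemma prob_exchangeable:
  fixes Q :: "(nat \<Rightarrow> real) \<Rightarrow> nat \<Rightarrow> bool"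
  assumes "m \<in> {1..N}" "n \<in> {1..N}"
    and sets: "{v\<in>space (PiM {1..N} (\<lambda>_. borel)). Q v m} \<in> sets (PiM {1..N} (\<lambda>_. borel))"
    and perm: "\<And>v \<sigma>. bij_betw \<sigma> {1..N} {1..N} \<Longrightarrow> Q (v \<circ> \<sigma>) m \<longleftrightarrow> Q v (\<sigma> m)"
    and local: "\<And>v w. (\<And>i. i \<in> {1..N} \<Longrightarrow> v i = w i) \<Longrightarrow> Q v m \<longleftrightarrow> Q w m"
  shows "prob {\<omega>\<in>space M. Q (\<lambda>i. T i \<omega>) n} = prob {\<omega>\<in>space M. Q (\<lambda>i. T i \<omega>) m}"
proof -
  let ?P = "PiM {1..N} (\<lambda>_. borel) :: (nat \<Rightarrow> real) measure"
  let ?\<sigma> = "Transposition.transpose m n"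
  have \<sigma>: "bij_betw ?\<sigma> {1..N} {1..N}" using assms(1,2) by (simp add: bij_betw_transpose_iff)
  have event: "{\<omega>\<in>space M. Q (\<lambda>i. T (\<tau> i) \<omega>) m}
      = (\<lambda>\<omega>. \<lambda>i\<in>{1..N}. T (\<tau> i) \<omega>) -` {v\<in>space ?P. Q v m} \<inter> space M" for \<tau>
    using local by (rule Collect_local_eq_vimage[where Q = "\<lambda>v. Q v m"])
  have \<sigma>_Pi: "?\<sigma> \<in> {1..N} \<rightarrow> {1..N}" and id_Pi: "id \<in> {1..N} \<rightarrow> {1..N}"
    using \<sigma> by (auto simp: bij_betw_def)
  have "{\<omega>\<in>space M. Q (\<lambda>i. T i \<omega>) n} = {\<omega>\<in>space M. Q (\<lambda>i. T (?\<sigma> i) \<omega>) m}"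
  proof (intro Collect_cong conj_cong refl)
    fix \<omega>
    show "Q (\<lambda>i. T i \<omega>) n \<longleftrightarrow> Q (\<lambda>i. T (?\<sigma> i) \<omega>) m"
      using perm[OF \<sigma>, of "\<lambda>i. T i \<omega>"] by (simp add: comp_def)
  qed
  also have "prob \<dots> = measure (distr M ?P (\<lambda>\<omega>. \<lambda>i\<in>{1..N}. T (?\<sigma> i) \<omega>)) {v\<in>space ?P. Q v m}"
    unfolding event[of ?\<sigma>] using measurable_restrict_T[OF \<sigma>_Pi] sets by (rule measure_distr[symmetric])
  also have "\<dots> = measure (distr M ?P (\<lambda>\<omega>. \<lambda>i\<in>{1..N}. T (id i) \<omega>)) {v\<in>space ?P. Q v m}"
    using distr_restrict_permute_iid[OF random_T indep_T distr_T_eq \<sigma>] assms(1) by simp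
  also have "\<dots> = prob {\<omega>\<in>space M. Q (\<lambda>i. T (id i) \<omega>) m}"
    unfolding event[of id] using measurable_restrict_T[OF id_Pi] sets by (rule measure_distr)
  finally show ?thesis by simp
qed

lemma pred_local:
  assumes "{v\<in>space (PiM {1..N} (\<lambda>_. borel)). Q v} \<in> sets (PiM {1..N} (\<lambda>_. borel))"
    and "\<And>v w. (\<And>i. i \<in> {1..N} \<Longrightarrow> v i = w i) \<Longrightarrow> Q v \<longleftrightarrow> Q w"
  shows "Measurable.pred M (\<lambda>\<omega>. Q (\<lambda>i. T i \<omega>))"
proof -
  have "{\<omega>\<in>space M. Q (\<lambda>i. T (id i) \<omega>)}
      = (\<lambda>\<omega>. \<lambda>i\<in>{1..N}. T (id i) \<omega>) -` {v\<in>space (PiM {1..N} (\<lambda>_. borel)). Q v} \<inter> space M"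
    using assms(2) by (rule Collect_local_eq_vimage)
  also have "\<dots> \<in> events"
    using measurable_restrict_T[of id] assms(1) by (auto intro: measurable_sets)
  finally show ?thesis by (simp add: pred_def)
qed

lemma real_N_mult_prob_eq_expectation:
  fixes Q :: "(nat \<Rightarrow> real) \<Rightarrow> nat \<Rightarrow> bool"
  assumes "n \<in> {1..N}"
    and sets: "\<And>m. m \<in> {1..N} \<Longrightarrow>
      {v\<in>space (PiM {1..N} (\<lambda>_. borel)). Q v m} \<in> sets (PiM {1..N} (\<lambda>_. borel))"
    and perm: "\<And>v \<sigma> m. bij_betw \<sigma> {1..N} {1..N} \<Longrightarrow> Q (v \<circ> \<sigma>) m \<longleftrightarrow> Q v (\<sigma> m)"
    and local: "\<And>v w m. m \<in> {1..N} \<Longrightarrow> (\<And>i. i \<in> {1..N} \<Longrightarrow> v i = w i) \<Longrightarrow> Q v m \<longleftrightarrow> Q w m"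
  shows "real N * prob {\<omega>\<in>space M. Q (\<lambda>i. T i \<omega>) n}
       = expectation (\<lambda>\<omega>. real (card {m\<in>{1..N}. Q (\<lambda>i. T i \<omega>) m}))"
proof -
  have "(\<Sum>m\<in>{1..N}. prob {\<omega>\<in>space M. Q (\<lambda>i. T i \<omega>) m})
      = (\<Sum>m\<in>{1..N}. prob {\<omega>\<in>space M. Q (\<lambda>i. T i \<omega>) n})"
  proof (rule sum.cong)
    fix m assume m: "m \<in> {1..N}"
    show "prob {\<omega>\<in>space M. Q (\<lambda>i. T i \<omega>) m} = prob {\<omega>\<in>space M. Q (\<lambda>i. T i \<omega>) n}"
      using prob_exchangeable[where Q = Q, OF m assms(1) sets[OF m] perm local[OF m]] by simp
  qed simp
  then have "real N * prob {\<omega>\<in>space M. Q (\<lambda>i. T i \<omega>) n}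
      = (\<Sum>m\<in>{1..N}. prob {\<omega>\<in>space M. Q (\<lambda>i. T i \<omega>) m})"
    by simp
  also have "\<dots> = expectation (\<lambda>\<omega>. real (card {m\<in>{1..N}. Q (\<lambda>i. T i \<omega>) m}))"
  proof (rule sum_prob_eq_expectation_card)
    fix m assume "m \<in> {1..N}"
    show "Measurable.pred M (\<lambda>\<omega>. Q (\<lambda>i. T i \<omega>) m)"
      using sets[OF \<open>m \<in> {1..N}\<close>] local[OF \<open>m \<in> {1..N}\<close>] by (rule pred_local[where Q = "\<lambda>v. Q v m"])
  qed simp
  finally show ?thesis .
qed

lemma sets_fail:
  assumes "m \<in> {1..N}"
  shows "{v\<in>space (PiM {1..N} (\<lambda>_. borel)). min TD (order_stat N v K) < v m} \<in> sets (PiM {1..N} (\<lambda>_. borel))"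
proof -
  have "{v\<in>space (PiM {1..N} (\<lambda>_. borel)). TD < v m \<or> K \<le> card {i\<in>{1..N}. v i < v m}}
      \<in> sets (PiM {1..N} (\<lambda>_. borel))"
    using assms by measurable
  then show ?thesis by (simp add: min_order_stat_less_iff[OF K_pos K_le_N])
qed

lemma sets_late_fail:
  assumes "m \<in> {1..N}"
  shows "{v\<in>space (PiM {1..N} (\<lambda>_. borel)). TD < order_stat N v K \<and> min TD (order_stat N v K) < v m}
       \<in> sets (PiM {1..N} (\<lambda>_. borel))"
proof -
  have "{v\<in>space (PiM {1..N} (\<lambda>_. borel)). card {i\<in>{1..N}. v i \<le> TD} < K}
      \<in> sets (PiM {1..N} (\<lambda>_. borel))"
    by measurable
  from sets.Int[OF this sets_fail[OF assms]] show ?thesis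
    by (simp add: less_order_stat_iff[OF K_pos K_le_N] Collect_conj_eq[symmetric] conj_ac)
qed

lemma pred_fail:
  assumes "m \<in> {1..N}"
  shows "Measurable.pred M (\<lambda>\<omega>. min TD (order_stat N (\<lambda>i. T i \<omega>) K) < T m \<omega>)"
proof -
  have "Measurable.pred M (\<lambda>\<omega>. TD < T m \<omega> \<or> K \<le> card {i\<in>{1..N}. T i \<omega> < T m \<omega>})"
    using assms by measurable
  then show ?thesis by (simp only: min_order_stat_less_iff[OF K_pos K_le_N])
qed

lemma borel_measurable_card_fail:
  "(\<lambda>\<omega>. real (card {m\<in>{1..N}. min TD (order_stat N (\<lambda>i. T i \<omega>) K) < T m \<omega>})) \<in> borel_measurable M"
proof -
  have "(\<lambda>\<omega>. card {m\<in>{1..N}. min TD (order_stat N (\<lambda>i. T i \<omega>) K) < T m \<omega>})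
      \<in> measurable M (count_space UNIV)"
    using pred_fail by (intro measurable_card_Collect) auto
  then show ?thesis by (rule measurable_compose) (simp add: measurable_count_space_eq1)
qed

abbreviation q :: real where "q \<equiv> exp (- lam * (TD - c))"

lemma expectation_card_T_le_TD:
  "expectation (\<lambda>\<omega>. g (card {i\<in>{1..N}. T i \<omega> \<le> TD}))
     = (\<Sum>k\<le>N. real (N choose k) * g k * (1 - q) ^ k * q ^ (N - k))"
proof -
  have "prob {\<omega>\<in>space M. T i \<omega> \<in> {..TD}} = 1 - q" if "i \<in> {1..N}" for i
    using cdf_T[OF that, of TD] deadline by (simp add: shexp_cdf_def)
  from expectation_fun_card_hits[OF _ indep_T _ this, of g] show ?thesis by simp
qed

lemma real_N_mult_prob_late_fail:
  assumes "n \<in> {1..N}"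
  shows "real N * prob {\<omega>\<in>space M. TD < order_stat N (\<lambda>i. T i \<omega>) K \<and>
                                    min TD (order_stat N (\<lambda>i. T i \<omega>) K) < T n \<omega>}
       = (\<Sum>k\<le>N. real (N choose k) * real (if k < K then N - k else 0) * (1 - q) ^ k * q ^ (N - k))"
proof -
  have "real N * prob {\<omega>\<in>space M. TD < order_stat N (\<lambda>i. T i \<omega>) K \<and>
                                   min TD (order_stat N (\<lambda>i. T i \<omega>) K) < T n \<omega>}
      = expectation (\<lambda>\<omega>. real (card {m\<in>{1..N}. TD < order_stat N (\<lambda>i. T i \<omega>) K \<and>
                                              min TD (order_stat N (\<lambda>i. T i \<omega>) K) < T m \<omega>}))"
  proof (rule real_N_mult_prob_eq_expectation[where
        Q = "\<lambda>v m. TD < order_stat N v K \<and> min TD (order_stat N v K) < v m", OF assms sets_late_fail])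
    show "TD < order_stat N (v \<circ> \<sigma>) K \<and> min TD (order_stat N (v \<circ> \<sigma>) K) < (v \<circ> \<sigma>) m
        \<longleftrightarrow> TD < order_stat N v K \<and> min TD (order_stat N v K) < v (\<sigma> m)"
      if "bij_betw \<sigma> {1..N} {1..N}" for v \<sigma> m
      using order_stat_permute[OF that] by simp
    show "TD < order_stat N v K \<and> min TD (order_stat N v K) < v m
        \<longleftrightarrow> TD < order_stat N w K \<and> min TD (order_stat N w K) < w m"
      if "m \<in> {1..N}" "\<And>i. i \<in> {1..N} \<Longrightarrow> v i = w i" for v w m
      using order_stat_cong[of N v w K] that by simp
  qed
  also have "\<dots> = expectation (\<lambda>\<omega>. real (if card {i\<in>{1..N}. T i \<omega> \<le> TD} < K
                                           then N - card {i\<in>{1..N}. T i \<omega> \<le> TD} else 0))"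
    by (intro Bochner_Integration.integral_cong refl) (simp only: card_late_fail[OF K_pos K_le_N])
  also have "\<dots> = (\<Sum>k\<le>N. real (N choose k) * real (if k < K then N - k else 0) * (1 - q) ^ k * q ^ (N - k))"
    by (rule expectation_card_T_le_TD)
  finally show ?thesis .
qed

lemma real_N_mult_prob_fail:
  assumes "n \<in> {1..N}"
  shows "real N * prob {\<omega>\<in>space M. min TD (order_stat N (\<lambda>i. T i \<omega>) K) < T n \<omega>}
       = (\<Sum>k\<le>N. real (N choose k) * real (N - min k K) * (1 - q) ^ k * q ^ (N - k))"
proof -
  have "real N * prob {\<omega>\<in>space M. min TD (order_stat N (\<lambda>i. T i \<omega>) K) < T n \<omega>}
      = expectation (\<lambda>\<omega>. real (card {m\<in>{1..N}. min TD (order_stat N (\<lambda>i. T i \<omega>) K) < T m \<omega>}))"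
  proof (rule real_N_mult_prob_eq_expectation[where
        Q = "\<lambda>v m. min TD (order_stat N v K) < v m", OF assms sets_fail])
    show "min TD (order_stat N (v \<circ> \<sigma>) K) < (v \<circ> \<sigma>) m \<longleftrightarrow> min TD (order_stat N v K) < v (\<sigma> m)"
      if "bij_betw \<sigma> {1..N} {1..N}" for v \<sigma> m
      using order_stat_permute[OF that] by simp
    show "min TD (order_stat N v K) < v m \<longleftrightarrow> min TD (order_stat N w K) < w m"
      if "m \<in> {1..N}" "\<And>i. i \<in> {1..N} \<Longrightarrow> v i = w i" for v w m
      using order_stat_cong[of N v w K] that by simp
  qed
  also have "\<dots> = expectation (\<lambda>\<omega>. real (N - min (card {i\<in>{1..N}. T i \<omega> \<le> TD}) K))"
  proof (rule integral_cong_AE)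
    show "AE \<omega> in M. real (card {m\<in>{1..N}. min TD (order_stat N (\<lambda>i. T i \<omega>) K) < T m \<omega>})
        = real (N - min (card {i\<in>{1..N}. T i \<omega> \<le> TD}) K)"
      using AE_inj_on_T by eventually_elim (simp only: card_fail[OF K_pos K_le_N])
  qed (use borel_measurable_card_fail in measurable)
  also have "\<dots> = (\<Sum>k\<le>N. real (N choose k) * real (N - min k K) * (1 - q) ^ k * q ^ (N - k))"
    by (rule expectation_card_T_le_TD)
  finally show ?thesis .
qed

lemma cond_prob_late_given_fail:
  assumes "n \<in> {1..N}"
  shows "cond_prob M (\<lambda>x. TD < order_stat N (\<lambda>i. T i x) K)
                     (\<lambda>x. T n x > min TD (order_stat N (\<lambda>i. T i x) K))
       = (real (N - K) * Zcoef N lam c TD K + (\<Sum>h = 1..K. Zcoef N lam c TD h))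
         / (real N * q + real (N - K) - (\<Sum>h = K+1..N. Zcoef N lam c TD h))"
proof -
  have "N \<noteq> 0" using K_pos K_le_N by simp
  then have "cond_prob M (\<lambda>x. TD < order_stat N (\<lambda>i. T i x) K)
                         (\<lambda>x. T n x > min TD (order_stat N (\<lambda>i. T i x) K))
      = (real N * prob {\<omega>\<in>space M. TD < order_stat N (\<lambda>i. T i \<omega>) K \<and>
                                   min TD (order_stat N (\<lambda>i. T i \<omega>) K) < T n \<omega>})
        / (real N * prob {\<omega>\<in>space M. min TD (order_stat N (\<lambda>i. T i \<omega>) K) < T n \<omega>})"
    by (simp add: cond_prob_def)
  also have "\<dots> = (real (N - K) * Zcoef N lam c TD K + (\<Sum>h = 1..K. Zcoef N lam c TD h))
         / (real N * q + real (N - K) - (\<Sum>h = K+1..N. Zcoef N lam c TD h))"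
    unfolding real_N_mult_prob_late_fail[OF assms] real_N_mult_prob_fail[OF assms]
    using late_fail_weights_eq_Zcoef[OF K_pos K_le_N refl] fail_weights_eq_Zcoef[OF K_pos K_le_N refl]
    by simp
  finally show ?thesis .
qed

end

theorem proposition2:
  fixes M :: "'a measure" and T :: "nat \<Rightarrow> 'a \<Rightarrow> real"
    and N K n :: nat and lam c TD :: real
  assumes "prob_space M"
    and "N \<ge> 1" and "1 \<le> K" and "K \<le> N"
    and "lam > 0" and "c > 0" and "TD > c"
    and "\<And>i. i \<in> {1..N} \<Longrightarrow> T i \<in> borel_measurable M"
    and "prob_space.indep_vars M (\<lambda>_. borel) T {1..N}"
    and "\<And>i t. i \<in> {1..N} \<Longrightarrow> measure M {x \<in> space M. T i x \<le> t} = shexp_cdf lam c t"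
    and "n \<in> {1..N}"
  shows "cond_prob M (\<lambda>x. TD < order_stat N (\<lambda>i. T i x) K)
                     (\<lambda>x. T n x > min TD (order_stat N (\<lambda>i. T i x) K))
       = (real (N - K) * Zcoef N lam c TD K + (\<Sum>h = 1..K. Zcoef N lam c TD h))
         / (real N * exp (- lam * (TD - c)) + real (N - K) - (\<Sum>h = K+1..N. Zcoef N lam c TD h))"
proof -
  interpret shifted_exp_multicast M T N K lam c TD
    by (intro shifted_exp_multicast.intro shifted_exp_multicast_axioms.intro) (fact assms)+
  show ?thesis using cond_prob_late_given_fail[OF assms(11)] .
qed

end
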